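(* Let $i\ge 3$ and $k\ge 3$ be integers. Then: (a) $n_2(F_i,F_{i+2},F_{i+k})=\tfrac12\bigl(5F_iF_{i+2}-F_i-F_{i+2}+1\bigr)$ whenever $k\ge i+3$; (b) $n_2(F_i,F_{i+2},F_{2i+2})=\tfrac12\bigl((7F_{i+2}-6F_i-1)F_i-F_{i+2}+1\bigr)$; (c) $n_2(F_i,F_{i+2},F_{2i+1})=\tfrac12\bigl((7F_{i+2}-8F_i-1)F_i-F_{i+2}+1\bigr)$; (d) $n_2(F_i,F_{i+2},F_{2i})=\tfrac12\bigl(3F_iF_{i+2}-F_i-F_{i+2}+1\bigr)$; (e) $n_2(F_i,F_{i+2},F_{2i-1})=\tfrac12\bigl((170F_i-1)F_i+(24F_{i+2}-125F_i-1)F_{i+2}+1\bigr)$; (f) if $r=\lfloor (F_i-1)/F_k\rfloor\ge 2$ (equivalently $k\le i-2$), then $$n_2(F_i,F_{i+2},F_{i+k})=\tfrac12\bigl((F_i+4F_k-1)F_{i+2}-F_i+1\bigr)-\tfrac12\bigl(2rF_i-(r+3)(r-2)F_k\bigr)F_{k-2}.$$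
   Context: Fibonacci numbers: $F_0=0$, $F_1=1$, $F_n=F_{n-1}+F_{n-2}$. For positive integers $a_1,\dots,a_l$ with $\gcd(a_1,\dots,a_l)=1$ and an integer $n$, let $d(n;a_1,\dots,a_l)$ be the number of tuples $(x_1,\dots,x_l)$ of nonnegative integers with $a_1x_1+\dots+a_lx_l=n$. For a nonnegative integer $p$, the $p$-Sylvester number $n_p(a_1,\dots,a_l)$ is the number of nonnegative integers $n$ with $d(n;a_1,\dots,a_l)\le p$. *)

theory Defs
  imports "HOL-Number_Theory.Fib"
begin

definition num_reps :: "nat \<Rightarrow> nat list \<Rightarrow> nat" where
  "num_reps n as = card {xs :: nat list. length xs = length as \<and>
      (\<Sum>j<length as. as ! j * xs ! j) = n}"

definition sylvester_p :: "nat \<Rightarrow> nat list \<Rightarrow> nat" where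
  "sylvester_p p as = card {n :: nat. num_reps n as \<le> p}"

end

(*
  Put a = F_i and b = F_(i+2), which are coprime, and write the third generator as
  c = alpha * b - beta * a.  Every n >= 0 is uniquely n = b * s + a * u with 0 <= s < a and
  u >= -floor (b * s / a), and the representations of n correspond to the lattice points (z, m)
  with alpha * z <= s + a * m and weight b * m - beta * z <= u.  Hence d(n) <= 2 exactly when u
  lies below the third smallest weight w(s) in the residue class of s, and summing over s with
  sum floor (b * s / a) = (a - 1) * (b - 1) / 2 gives 2 * n_2 = (a - 1) * (b - 1) + 2 * sum w(s).
  The identity F_(i+k) = F_k * F_(i+2) - F_(k-2) * F_i supplies alpha and beta in each case of the
  theorem, and there the three lightest lattice points of every residue class can be listed.
*)

theory Submission
  imports Defs "HOL-Number_Theory.Cong"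
begin

lemma zero_le_add_mult_iff:
  fixes A u :: int
  assumes "0 < a"
  shows "0 \<le> A + a * u \<longleftrightarrow> - (A div a) \<le> u"
proof -
  have "0 \<le> A + a * u \<longleftrightarrow> 0 \<le> (A + a * u) div a"
    by (rule pos_imp_zdiv_nonneg_iff[OF assms, symmetric])
  also have "(A + a * u) div a = A div a + u"
    using assms by simp
  finally show ?thesis by linarith
qed

lemma mult_div_le_less:
  fixes f n :: nat
  assumes "0 < f"
  shows "f * (n div f) \<le> n" and "n < f * (n div f) + f"
  using mult_div_mod_eq[of f n] mod_less_divisor[OF assms, of n] by linarith+

lemma sum_lessThan_split:
  fixes h :: "nat \<Rightarrow> 'a :: comm_monoid_add"
  assumes "A \<le> B"
  shows "(\<Sum>s<B. h s) = (\<Sum>s<A. h s) + (\<Sum>s\<in>{A..<B}. h s)"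
  unfolding lessThan_atLeast0 using assms by (simp add: sum.atLeastLessThan_concat)

lemma sum_lessThan_shift:
  fixes h :: "nat \<Rightarrow> 'a :: ab_group_add"
  shows "(\<Sum>s<M. h (s + A)) = (\<Sum>s<A + M. h s) - (\<Sum>s<A. h s)"
  using sum_lessThan_split[of A "A + M" h] sum.shift_bounds_nat_ivl[of h 0 A M]
  by (simp add: lessThan_atLeast0 add.commute)

lemma sum_lessThan_if_le:
  fixes X Y :: "'a :: comm_semiring_1"
  assumes "e \<le> a"
  shows "(\<Sum>s<a. if e \<le> s then X else Y) = of_nat e * Y + of_nat (a - e) * X"
proof -
  have "(\<Sum>s<a. if e \<le> s then X else Y)
      = (\<Sum>s<e. if e \<le> s then X else Y) + (\<Sum>s\<in>{e..<a}. if e \<le> s then X else Y)"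
    by (subst ivl_disj_un_one(2)[OF assms, symmetric], rule sum.union_disjoint) auto
  also have "(\<Sum>s<e. if e \<le> s then X else Y) = (\<Sum>s<e. Y)"
    by (rule sum.cong) auto
  also have "(\<Sum>s\<in>{e..<a}. if e \<le> s then X else Y) = (\<Sum>s\<in>{e..<a}. X)"
    by (rule sum.cong) auto
  finally show ?thesis
    by simp
qed

lemma div_add_div_complement:
  fixes a b s :: nat
  assumes "coprime a b" and "0 < s" and "s < a"
  shows "b * s div a + b * (a - s) div a = b - 1"
proof -
  have "\<not> a dvd b * s"
    using assms by (auto simp: coprime_dvd_mult_right_iff dest: dvd_imp_le)
  then have "\<not> int a dvd int b * int s"
    by (metis of_nat_dvd_iff of_nat_mult)
  have "int (b * (a - s) div a) = (- (int b * int s) + int b * int a) div int a"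
    using assms by (simp add: zdiv_int algebra_simps)
  also have "\<dots> = int b + - (int b * int s) div int a"
    using assms by (intro div_mult_self1) simp
  also have "\<dots> = int b - int b * int s div int a - 1"
    using \<open>\<not> int a dvd int b * int s\<close> assms by (simp add: zdiv_zminus1_eq_if dvd_eq_mod_eq_0)
  finally have "int (b * (a - s) div a) = int b - int (b * s div a) - 1"
    by (simp add: zdiv_int)
  then show ?thesis
    by linarith
qed

lemma sum_div_coprime:
  fixes a b :: nat
  assumes "coprime a b"
  shows "2 * (\<Sum>s<a. b * s div a) = (a - 1) * (b - 1)"
proof (cases "a = 0")
  case False
  have "(\<Sum>s<a. b * s div a) = (\<Sum>s\<in>{1..<a}. b * s div a)"
    using False by (simp add: lessThan_atLeast0 sum.atLeast_Suc_lessThan)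
  moreover have "(\<Sum>s\<in>{1..<a}. b * s div a) = (\<Sum>s\<in>{1..<a}. b * (a - s) div a)"
    by (subst sum.atLeastLessThan_rev) (rule sum.cong, auto)
  ultimately have "2 * (\<Sum>s<a. b * s div a) = (\<Sum>s\<in>{1..<a}. b * s div a + b * (a - s) div a)"
    by (simp add: sum.distrib)
  also have "\<dots> = (\<Sum>s\<in>{1..<a}. b - 1)"
    using div_add_div_complement[OF assms] by (intro sum.cong) auto
  finally show ?thesis by simp
qed simp

lemma bij_betw_residue_coordinates:
  fixes a b :: nat
  assumes cop: "coprime a b" and "0 < a"
  shows "bij_betw (\<lambda>(s, u). nat (int b * int s + int a * u))
           (SIGMA s:{..<a}. {- (int b * int s div int a)..}) UNIV"
proof (rule bij_betw_imageI)
  have nonneg: "0 \<le> int b * int s + int a * u \<longleftrightarrow> - (int b * int s div int a) \<le> u" for s u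
    using zero_le_add_mult_iff[of "int a"] \<open>0 < a\<close> by simp
  show "inj_on (\<lambda>(s, u). nat (int b * int s + int a * u))
      (SIGMA s:{..<a}. {- (int b * int s div int a)..})"
  proof (rule inj_onI, clarsimp)
    fix s s' :: nat and u u' :: int
    assume "s < a" "s' < a" "- (int b * int s div int a) \<le> u" "- (int b * int s' div int a) \<le> u'"
      and "nat (int b * int s + int a * u) = nat (int b * int s' + int a * u')"
    then have eq: "int b * int s + int a * u = int b * int s' + int a * u'"
      using nonneg by (simp add: eq_nat_nat_iff)
    then have "[int b * int s = int b * int s'] (mod int a)"
      unfolding cong_iff_lin by (intro exI[of _ "u - u'"]) (simp add: algebra_simps)
    then have "[s = s'] (mod a)"
      using cop by (simp add: cong_mult_lcancel coprime_commute flip: cong_int_iff)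
    then have "s = s'"
      using \<open>s < a\<close> \<open>s' < a\<close> by (rule cong_less_modulus_unique_nat)
    then show "s = s' \<and> u = u'"
      using eq \<open>0 < a\<close> by simp
  qed
  show "(\<lambda>(s, u). nat (int b * int s + int a * u))
      ` (SIGMA s:{..<a}. {- (int b * int s div int a)..}) = UNIV"
  proof (intro set_eqI iffI)
    fix n :: nat
    obtain x where x: "[b * x = 1] (mod a)"
      using cong_solve_coprime_nat[of b a] cop by (auto simp: coprime_commute)
    define s where "s = n * x mod a"
    have "[b * s = n] (mod a)"
    proof -
      have "[b * s = n * (b * x)] (mod a)"
        unfolding s_def cong_def by (simp add: mod_mult_right_eq mult.commute mult.left_commute)
      also have "[n * (b * x) = n * 1] (mod a)"
        using x by (rule cong_scalar_left)
      finally show ?thesis by simp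
    qed
    then obtain u where u: "int n = int b * int s + int a * u"
      by (metis cong_iff_lin cong_int_iff of_nat_mult)
    show "n \<in> (\<lambda>(s, u). nat (int b * int s + int a * u))
        ` (SIGMA s:{..<a}. {- (int b * int s div int a)..})"
      using u nonneg[of s u] \<open>0 < a\<close> by (auto simp: s_def intro!: image_eqI[of _ _ "(s, u)"])
  qed simp
qed

lemma num_reps_three:
  "num_reps n [a, b, c] = card {(x, y, z). a * x + b * y + c * z = n}"
proof -
  have "{xs. length xs = length [a, b, c] \<and> (\<Sum>j<length [a, b, c]. [a, b, c] ! j * xs ! j) = n}
      = (\<lambda>(x, y, z). [x, y, z]) ` {(x, y, z). a * x + b * y + c * z = n}"
    by (auto simp: numeral_3_eq_3 lessThan_Suc length_Suc_conv image_iff)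
  moreover have "inj (\<lambda>(x :: nat, y :: nat, z :: nat). [x, y, z])"
    by (auto simp: inj_def)
  ultimately show ?thesis
    unfolding num_reps_def by (simp add: card_image inj_on_subset)
qed

lemma finite_solutions_three:
  fixes a b c :: nat
  assumes "0 < a" and "0 < b" and "0 < c"
  shows "finite {(x, y, z). a * x + b * y + c * z = n}"
proof (rule finite_subset)
  have "x \<le> n \<and> y \<le> n \<and> z \<le> n" if "a * x + b * y + c * z = n" for x y z
  proof -
    have "x \<le> a * x" and "y \<le> b * y" and "z \<le> c * z"
      using assms by simp_all
    then show ?thesis
      using that by linarith
  qed
  then show "{(x, y, z). a * x + b * y + c * z = n} \<subseteq> {..n} \<times> {..n} \<times> {..n}"
    by auto
qed simp

section \<open>Representations as weighted lattice points\<close>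

locale sylvester_triple =
  fixes a b c \<alpha> :: nat and \<beta> :: int
  assumes a_pos: "0 < a" and b_pos: "0 < b" and c_pos: "0 < c" and coprime_ab: "coprime a b"
    and c_eq: "int c = int \<alpha> * int b - \<beta> * int a"
begin

(* For n = b * s + a * u the solution (x, y, z) of a * x + b * y + c * z = n belongs to the lattice
   point (z, m) with y = s + a * m - alpha * z and x = u - weight z m. *)
definition weight :: "nat \<Rightarrow> nat \<Rightarrow> int" where
  "weight z m = int b * int m - \<beta> * int z"

definition lattice_points :: "nat \<Rightarrow> int \<Rightarrow> (nat \<times> nat) set" where
  "lattice_points s u = {(z, m). \<alpha> * z \<le> s + a * m \<and> weight z m \<le> u}"

lemma c_mult_le_weight:
  assumes "\<alpha> * z \<le> s + a * m"
  shows "int c * int z - int b * int s \<le> int a * weight z m"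
proof -
  have "int b * (int \<alpha> * int z - int s) \<le> int b * (int a * int m)"
    using assms by (intro mult_left_mono) (simp_all flip: of_nat_mult of_nat_add)
  then show ?thesis
    by (simp add: weight_def c_eq algebra_simps)
qed

lemma m_mult_c_le_weight:
  assumes "0 \<le> \<beta>" and "\<alpha> * z \<le> s + a * m"
  shows "int m * int c - \<beta> * int s \<le> int \<alpha> * weight z m"
proof -
  have "\<beta> * (int \<alpha> * int z) \<le> \<beta> * (int s + int a * int m)"
    using assms by (intro mult_left_mono) (simp_all flip: of_nat_mult of_nat_add)
  then show ?thesis
    by (simp add: weight_def c_eq algebra_simps)
qed

lemma solution_of_lattice_point:
  assumes "(z, m) \<in> lattice_points s u" and "int b * int s + int a * u = int n"
  shows "a * nat (u - weight z m) + b * (s + a * m - \<alpha> * z) + c * z = n"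
proof -
  have "int (a * nat (u - weight z m) + b * (s + a * m - \<alpha> * z) + c * z)
      = int a * (u - weight z m) + int b * (int s + int a * int m - int \<alpha> * int z) + int c * int z"
    using assms(1) by (simp add: lattice_points_def)
  also have "\<dots> = int n"
    using assms(2) by (simp add: weight_def c_eq algebra_simps)
  finally show ?thesis
    by (simp only: of_nat_eq_iff)
qed

lemma lattice_point_of_solution:
  assumes "s < a" and "int b * int s + int a * u = int n" and "a * x + b * y + c * z = n"
  obtains m where "(z, m) \<in> lattice_points s u" and "y = s + a * m - \<alpha> * z" and "int x = u - weight z m"
proof -
  define t where "t = int y + int \<alpha> * int z - int s"
  have "int a * int x + int b * int y + int c * int z = int b * int s + int a * u"
    using assms(2,3) by (metis of_nat_add of_nat_mult)
  then have bt: "int b * t = int a * (u - int x + \<beta> * int z)"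
    unfolding t_def by (simp add: c_eq algebra_simps)
  then have "int a dvd int b * t"
    by simp
  then have "int a dvd t"
    using coprime_ab by (simp add: coprime_dvd_mult_right_iff)
  then obtain k where k: "t = int a * k"
    by blast
  have "0 \<le> int \<alpha> * int z"
    by simp
  then have "- int a < int a * k"
    using assms(1) unfolding k[symmetric] t_def by linarith
  then have "0 \<le> k"
    using a_pos mult_less_cancel_left_pos[of "int a" "-1" k] by simp
  have "int (y + \<alpha> * z) = int (s + a * nat k)"
    using k \<open>0 \<le> k\<close> unfolding t_def by simp
  then have "y + \<alpha> * z = s + a * nat k"
    by (simp only: of_nat_eq_iff)
  then have "\<alpha> * z \<le> s + a * nat k" and "y = s + a * nat k - \<alpha> * z"
    by linarith+
  moreover have "int x = u - weight z (nat k)"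
  proof -
    have "int a * (int b * k) = int a * (u - int x + \<beta> * int z)"
      using bt k by (simp add: algebra_simps)
    then show ?thesis
      using a_pos \<open>0 \<le> k\<close> by (simp add: weight_def)
  qed
  ultimately show ?thesis
    using that by (simp add: lattice_points_def)
qed

lemma bij_betw_lattice_points_solutions:
  assumes "s < a" and "int b * int s + int a * u = int n"
  shows "bij_betw (\<lambda>(z, m). (nat (u - weight z m), s + a * m - \<alpha> * z, z))
           (lattice_points s u) {(x, y, z). a * x + b * y + c * z = n}"
proof (rule bij_betw_imageI)
  show "inj_on (\<lambda>(z, m). (nat (u - weight z m), s + a * m - \<alpha> * z, z)) (lattice_points s u)"
  proof (rule inj_onI, clarsimp)
    fix z m m'
    assume "(z, m) \<in> lattice_points s u" and "(z, m') \<in> lattice_points s u"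
      and eq: "s + a * m - \<alpha> * z = s + a * m' - \<alpha> * z"
    then have "\<alpha> * z \<le> s + a * m" and "\<alpha> * z \<le> s + a * m'"
      by (auto simp: lattice_points_def)
    with eq have "a * m = a * m'"
      by linarith
    then show "m = m'"
      using a_pos by simp
  qed
  show "(\<lambda>(z, m). (nat (u - weight z m), s + a * m - \<alpha> * z, z)) ` lattice_points s u
      = {(x, y, z). a * x + b * y + c * z = n}"
  proof (intro set_eqI iffI)
    fix p
    assume "p \<in> {(x, y, z). a * x + b * y + c * z = n}"
    then obtain x y z where p: "p = (x, y, z)" and sol: "a * x + b * y + c * z = n"
      by auto
    obtain m where "(z, m) \<in> lattice_points s u" and "y = s + a * m - \<alpha> * z" and "int x = u - weight z m"
      using lattice_point_of_solution[OF assms sol] .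
    then show "p \<in> (\<lambda>(z, m). (nat (u - weight z m), s + a * m - \<alpha> * z, z)) ` lattice_points s u"
      unfolding p by (auto intro!: image_eqI[of _ _ "(z, m)"])
  qed (auto dest: solution_of_lattice_point[OF _ assms(2)])
qed

lemma weight_lower_bound:
  assumes "(z, m) \<in> lattice_points s u"
  shows "- (int b * int s div int a) \<le> weight z m"
proof -
  have "int c * int z - int b * int s \<le> int a * weight z m"
    using c_mult_le_weight[of z s m] assms by (simp add: lattice_points_def)
  moreover have "0 \<le> int c * int z"
    by simp
  ultimately have "0 \<le> int b * int s + int a * weight z m"
    by linarith
  then show ?thesis
    using zero_le_add_mult_iff[of "int a"] a_pos by simp
qed

lemma finite_lattice_points:
  assumes "s < a"
  shows "finite (lattice_points s u)"
proof (cases "0 \<le> int b * int s + int a * u")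
  case True
  then obtain n where n: "int b * int s + int a * u = int n"
    by (metis nonneg_int_cases)
  show ?thesis
    using bij_betw_finite[OF bij_betw_lattice_points_solutions[OF assms n]]
      finite_solutions_three[OF a_pos b_pos c_pos] by simp
next
  case False
  have "lattice_points s u = {}"
  proof safe
    fix z m
    assume zm: "(z, m) \<in> lattice_points s u"
    then have "- (int b * int s div int a) \<le> u"
      using weight_lower_bound[OF zm] by (simp add: lattice_points_def)
    then show "(z, m) \<in> {}"
      using False zero_le_add_mult_iff[of "int a"] a_pos by simp
  qed
  then show ?thesis
    by simp
qed

lemma num_reps_eq_card_lattice_points:
  assumes "s < a" and "int b * int s + int a * u = int n"
  shows "num_reps n [a, b, c] = card (lattice_points s u)"
  using bij_betw_same_card[OF bij_betw_lattice_points_solutions[OF assms]] by (simp add: num_reps_three)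

lemma lattice_points_mono: "u \<le> u' \<Longrightarrow> lattice_points s u \<subseteq> lattice_points s u'"
  by (auto simp: lattice_points_def)

lemma three_le_card_lattice_points:
  assumes "s < a" and "distinct [p, q, r]" and "{p, q, r} \<subseteq> lattice_points s u"
  shows "3 \<le> card (lattice_points s u)"
  using card_mono[OF finite_lattice_points[OF \<open>s < a\<close>] assms(3)] assms(2) by simp

lemma card_lattice_points_le_2:
  assumes "\<And>z m. (z, m) \<in> lattice_points s u \<Longrightarrow> (z, m) = p \<or> (z, m) = q"
  shows "card (lattice_points s u) \<le> 2"
proof -
  have "lattice_points s u \<subseteq> {p, q}"
    using assms by auto
  then have "card (lattice_points s u) \<le> card {p, q}"
    by (intro card_mono) simp_all
  also have "\<dots> \<le> 2"
    by (simp add: card_insert_if)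
  finally show ?thesis .
qed

lemma num_reps_le_2_iff:
  assumes three: "3 \<le> card (lattice_points s w)" and two: "card (lattice_points s (w - 1)) \<le> 2"
    and "s < a" and n: "int b * int s + int a * u = int n"
  shows "num_reps n [a, b, c] \<le> 2 \<longleftrightarrow> u < w"
proof
  assume "num_reps n [a, b, c] \<le> 2"
  moreover have "w \<le> u \<Longrightarrow> card (lattice_points s w) \<le> card (lattice_points s u)"
    using \<open>s < a\<close> by (intro card_mono finite_lattice_points lattice_points_mono)
  ultimately show "u < w"
    using three num_reps_eq_card_lattice_points[OF \<open>s < a\<close> n] by linarith
next
  assume "u < w"
  then have "card (lattice_points s u) \<le> card (lattice_points s (w - 1))"
    using \<open>s < a\<close> by (intro card_mono finite_lattice_points lattice_points_mono) simp_all
  then show "num_reps n [a, b, c] \<le> 2"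
    using two num_reps_eq_card_lattice_points[OF \<open>s < a\<close> n] by linarith
qed

theorem sylvester_2_eq_sum:
  fixes w :: "nat \<Rightarrow> int"
  assumes three: "\<And>s. s < a \<Longrightarrow> 3 \<le> card (lattice_points s (w s))"
    and two: "\<And>s. s < a \<Longrightarrow> card (lattice_points s (w s - 1)) \<le> 2"
  shows "2 * int (sylvester_p 2 [a, b, c]) = (int a - 1) * (int b - 1) + 2 * (\<Sum>s<a. w s)"
proof -
  define L where "L s = - (int b * int s div int a)" for s
  define \<phi> where "\<phi> = (\<lambda>(s, u). nat (int b * int s + int a * u))"
  define D where "D = (SIGMA s:{..<a}. {L s..<w s})"
  have bij: "bij_betw \<phi> (SIGMA s:{..<a}. {L s..}) UNIV"
    using bij_betw_residue_coordinates[OF coprime_ab a_pos] by (simp add: \<phi>_def L_def)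
  have L_le_w: "L s \<le> w s" if s: "s < a" for s
  proof -
    obtain p where "p \<in> lattice_points s (w s)"
      using three[OF s] by (metis card.empty ex_in_conv not_numeral_le_zero)
    then show ?thesis
      unfolding L_def using weight_lower_bound by (force simp: lattice_points_def)
  qed
  have n_eq: "int b * int s + int a * u = int (\<phi> (s, u))" if "L s \<le> u" for s u
    using that zero_le_add_mult_iff[of "int a"] a_pos by (simp add: \<phi>_def L_def)
  have "D = {p \<in> (SIGMA s:{..<a}. {L s..}). num_reps (\<phi> p) [a, b, c] \<le> 2}"
    unfolding D_def using num_reps_le_2_iff[OF three two _ n_eq] by auto
  then have "bij_betw \<phi> D {n. num_reps n [a, b, c] \<le> 2}"
    using bij by (intro bij_betw_subset[OF bij]) (auto simp: bij_betw_def)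
  then have "sylvester_p 2 [a, b, c] = card D"
    unfolding sylvester_p_def by (simp add: bij_betw_same_card)
  also have "\<dots> = (\<Sum>s<a. nat (w s - L s))"
    unfolding D_def by (subst card_SigmaI) auto
  finally have "int (sylvester_p 2 [a, b, c]) = (\<Sum>s<a. int (nat (w s - L s)))"
    by simp
  also have "\<dots> = (\<Sum>s<a. w s + int (b * s div a))"
    using L_le_w by (intro sum.cong) (fastforce simp: L_def zdiv_int)+
  also have "\<dots> = (\<Sum>s<a. w s) + int (\<Sum>s<a. b * s div a)"
    by (simp add: sum.distrib)
  finally show ?thesis
    using arg_cong[OF sum_div_coprime[OF coprime_ab], of int] a_pos b_pos by (simp add: of_nat_diff)
qed

end

section \<open>Generators with explicit third weights\<close>

lemma sylvester_2_large_c: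
  fixes a b c \<alpha> g :: nat
  assumes "0 < a" and "0 < b" and "coprime a b" and c_eq: "int c = int \<alpha> * int b - int g * int a"
    and large: "3 * int a * int b - int b \<le> int c"
  shows "2 * int (sylvester_p 2 [a, b, c]) = (int a - 1) * (int b - 1) + 4 * int a * int b"
proof -
  have "int b \<le> int a * int b"
    using mult_right_mono[of 1 "int a" "int b"] \<open>0 < a\<close> by simp
  then have "0 < c"
    using large \<open>0 < b\<close> by linarith
  interpret sylvester_triple a b c \<alpha> "int g"
    using assms \<open>0 < c\<close> by unfold_locales
  have "2 * int (sylvester_p 2 [a, b, c]) = (int a - 1) * (int b - 1) + 2 * (\<Sum>s<a. 2 * int b)"
  proof (rule sylvester_2_eq_sum)
    fix s
    assume "s < a"
    show "3 \<le> card (lattice_points s (2 * int b))"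
      using \<open>s < a\<close> by (rule three_le_card_lattice_points[of s "(0, 0)" "(0, 1)" "(0, 2)"])
        (auto simp: lattice_points_def weight_def)
    show "card (lattice_points s (2 * int b - 1)) \<le> 2"
    proof (rule card_lattice_points_le_2[of _ _ "(0, 0)" "(0, 1)"])
      fix z m
      assume zm: "(z, m) \<in> lattice_points s (2 * int b - 1)"
      have "z = 0"
      proof (rule ccontr)
        assume "z \<noteq> 0"
        have "int c \<le> int c * int z"
          using \<open>z \<noteq> 0\<close> by (simp add: mult_le_cancel_left1)
        moreover have "int b * int s \<le> int b * (int a - 1)"
          using \<open>s < a\<close> by (intro mult_left_mono) auto
        moreover have "int c * int z - int b * int s \<le> int a * weight z m"
          using zm by (intro c_mult_le_weight) (simp add: lattice_points_def)
        ultimately have "int a * (2 * int b) \<le> int a * weight z m"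
          using large by (simp add: algebra_simps)
        then show False
          using zm \<open>0 < a\<close> by (simp add: lattice_points_def)
      qed
      then show "(z, m) = (0, 0) \<or> (z, m) = (0, 1)"
        using zm \<open>0 < b\<close> by (auto simp: lattice_points_def weight_def)
    qed
  qed
  then show ?thesis
    by simp
qed

locale sylvester_triple_plus = sylvester_triple a b c e "- int h" for a b c e h :: nat
begin

lemma mem_lattice_points_iff:
  "(z, m) \<in> lattice_points s u \<longleftrightarrow> e * z \<le> s + a * m \<and> int (b * m + h * z) \<le> u"
  by (simp add: lattice_points_def weight_def)

lemma mem_lattice_points_below_iff:
  "(z, m) \<in> lattice_points s (int w - 1) \<longleftrightarrow> e * z \<le> s + a * m \<and> b * m + h * z < w"
proof -
  have "weight z m = int (b * m + h * z)"
    by (simp add: weight_def)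
  then show ?thesis
    by (auto simp: lattice_points_def simp del: of_nat_add of_nat_mult)
qed

lemma card_lattice_points_below_b:
  assumes "b \<le> 2 * h"
  shows "card (lattice_points s (int b - 1)) \<le> 2"
proof (rule card_lattice_points_le_2[of _ _ "(0, 0)" "(1, 0)"])
  fix z m
  assume "(z, m) \<in> lattice_points s (int b - 1)"
  then have W: "b * m + h * z < b"
    by (simp only: mem_lattice_points_below_iff)
  then have "m = 0"
    by (cases m) auto
  moreover have "h * z < h * 2"
    using W assms by linarith
  ultimately show "(z, m) = (0, 0) \<or> (z, m) = (1, 0)"
    by auto
qed

lemma card_lattice_points_below_h:
  assumes "h \<le> 2 * b"
  shows "card (lattice_points s (int h - 1)) \<le> 2"
proof (rule card_lattice_points_le_2[of _ _ "(0, 0)" "(0, 1)"])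
  fix z m
  assume "(z, m) \<in> lattice_points s (int h - 1)"
  then have W: "b * m + h * z < h"
    by (simp only: mem_lattice_points_below_iff)
  then have "z = 0"
    by (cases z) auto
  moreover have "b * m < b * 2"
    using W assms by linarith
  ultimately show "(z, m) = (0, 0) \<or> (z, m) = (0, 1)"
    by auto
qed

lemma card_lattice_points_below_2b:
  assumes "s < e" and "b \<le> h"
  shows "card (lattice_points s (int (2 * b) - 1)) \<le> 2"
proof (rule card_lattice_points_le_2[of _ _ "(0, 0)" "(0, 1)"])
  fix z m
  assume "(z, m) \<in> lattice_points s (int (2 * b) - 1)"
  then have "e * z \<le> s + a * m" and "b * m + h * z < 2 * b"
    by (simp_all only: mem_lattice_points_below_iff)
  then show "(z, m) = (0, 0) \<or> (z, m) = (0, 1)"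
    using assms by (cases z; cases m) auto
qed

lemma card_lattice_points_below_h_plus_b:
  assumes "s < e" and "h \<le> b"
  shows "card (lattice_points s (int (h + b) - 1)) \<le> 2"
proof (rule card_lattice_points_le_2[of _ _ "(0, 0)" "(0, 1)"])
  fix z m
  assume "(z, m) \<in> lattice_points s (int (h + b) - 1)"
  then have adm: "e * z \<le> s + a * m" and W: "b * m + h * z < h + b"
    by (simp_all only: mem_lattice_points_below_iff)
  have "b * m < b * 2"
    using W assms(2) by linarith
  then have "m = 0 \<or> m = 1"
    by auto
  then show "(z, m) = (0, 0) \<or> (z, m) = (0, 1)"
  proof
    assume "m = 0"
    then show ?thesis
      using adm assms(1) by (cases z) auto
  next
    assume "m = 1"
    then show ?thesis
      using W by (cases z) auto
  qed
qed

end

lemma sylvester_2_c_eq_add: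
  fixes a b c e h :: nat
  assumes "0 < a" and "0 < b" and "coprime a b" and c_eq: "c = e * b + h * a"
    and "e \<le> a" and "b \<le> h" and "h \<le> 2 * b"
  shows "2 * int (sylvester_p 2 [a, b, c])
    = (int a - 1) * (int b - 1) + 2 * (int e * (2 * int b) + int (a - e) * int h)"
proof -
  interpret sylvester_triple_plus a b c e h
    using assms by unfold_locales (simp_all add: mult_pos_pos)
  define w where "w s = (if e \<le> s then int h else 2 * int b)" for s
  have "2 * int (sylvester_p 2 [a, b, c]) = (int a - 1) * (int b - 1) + 2 * (\<Sum>s<a. w s)"
  proof (rule sylvester_2_eq_sum)
    fix s
    assume "s < a"
    show "3 \<le> card (lattice_points s (w s))"
    proof (cases "e \<le> s")
      case True
      show ?thesis
        using \<open>s < a\<close> by (rule three_le_card_lattice_points[of s "(0, 0)" "(0, 1)" "(1, 0)"])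
          (use True \<open>b \<le> h\<close> in \<open>auto simp: mem_lattice_points_iff w_def\<close>)
    next
      case False
      show ?thesis
        using \<open>s < a\<close> by (rule three_le_card_lattice_points[of s "(0, 0)" "(0, 1)" "(0, 2)"])
          (use False in \<open>auto simp: mem_lattice_points_iff w_def\<close>)
    qed
    show "card (lattice_points s (w s - 1)) \<le> 2"
      using card_lattice_points_below_h[OF \<open>h \<le> 2 * b\<close>, of s]
        card_lattice_points_below_2b[of s, OF _ \<open>b \<le> h\<close>] by (simp add: w_def)
  qed
  also have "(\<Sum>s<a. w s) = int e * (2 * int b) + int (a - e) * int h"
    unfolding w_def by (rule sum_lessThan_if_le[OF \<open>e \<le> a\<close>])
  finally show ?thesis .
qed

lemma sylvester_2_c_eq_add_double_square:
  fixes a b c e :: nat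
  assumes "0 < a" and "0 < b" and "coprime a b" and c_eq: "c = e * b + 2 * a * a"
    and "e \<le> a" and "2 * a \<le> b" and "b \<le> 4 * a"
  shows "2 * int (sylvester_p 2 [a, b, c])
    = (int a - 1) * (int b - 1) + 2 * (int e * (2 * int a + int b) + int (a - e) * int b)"
proof -
  define h where "h = 2 * a"
  have "h \<le> b" and "b \<le> 2 * h" and "int c = int e * int b - (- int h) * int a"
    using assms by (simp_all add: h_def)
  interpret sylvester_triple_plus a b c e h
    using assms \<open>int c = _\<close> by unfold_locales simp_all
  define w where "w s = (if e \<le> s then int b else int h + int b)" for s
  have "2 * int (sylvester_p 2 [a, b, c]) = (int a - 1) * (int b - 1) + 2 * (\<Sum>s<a. w s)"
  proof (rule sylvester_2_eq_sum)
    fix s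
    assume "s < a"
    show "3 \<le> card (lattice_points s (w s))"
    proof (cases "e \<le> s")
      case True
      show ?thesis
        using \<open>s < a\<close> by (rule three_le_card_lattice_points[of s "(0, 0)" "(1, 0)" "(0, 1)"])
          (use True \<open>h \<le> b\<close> in \<open>auto simp: mem_lattice_points_iff w_def\<close>)
    next
      case False
      show ?thesis
        using \<open>s < a\<close> by (rule three_le_card_lattice_points[of s "(0, 0)" "(0, 1)" "(1, 1)"])
          (use False \<open>e \<le> a\<close> in \<open>auto simp: mem_lattice_points_iff w_def\<close>)
    qed
    show "card (lattice_points s (w s - 1)) \<le> 2"
      using card_lattice_points_below_b[OF \<open>b \<le> 2 * h\<close>, of s]
        card_lattice_points_below_h_plus_b[of s, OF _ \<open>h \<le> b\<close>] by (simp add: w_def)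
  qed
  also have "(\<Sum>s<a. w s) = int e * (2 * int a + int b) + int (a - e) * int b"
    using sum_lessThan_if_le[OF \<open>e \<le> a\<close>, of "int b" "int h + int b"] by (simp add: w_def h_def)
  finally show ?thesis .
qed

lemma sylvester_2_c_eq_mult:
  fixes a b c l :: nat
  assumes "0 < a" and "0 < b" and "coprime a b" and c_eq: "c = l * a"
    and "l \<le> b" and "b \<le> 2 * l"
  shows "2 * int (sylvester_p 2 [a, b, c]) = (int a - 1) * (int b - 1) + 2 * int a * int b"
proof -
  interpret sylvester_triple_plus a b c 0 l
    using assms by unfold_locales simp_all
  have "2 * int (sylvester_p 2 [a, b, c]) = (int a - 1) * (int b - 1) + 2 * (\<Sum>s<a. int b)"
  proof (rule sylvester_2_eq_sum)
    fix s
    assume "s < a"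
    show "3 \<le> card (lattice_points s (int b))"
      using \<open>s < a\<close> by (rule three_le_card_lattice_points[of s "(0, 0)" "(1, 0)" "(0, 1)"])
        (use \<open>l \<le> b\<close> in \<open>auto simp: mem_lattice_points_iff\<close>)
    show "card (lattice_points s (int b - 1)) \<le> 2"
      by (rule card_lattice_points_below_b[OF \<open>b \<le> 2 * l\<close>])
  qed
  then show ?thesis
    by simp
qed

(* The third smallest weight when c = f * b - g * a is large, with q = s div f: the lightest lattice
   points are (q, 0), (q - 1, 0), (q - 2, 0) for q >= 2; (0, 0), (1, 0), (Z, 1) for q = 1;
   and (0, 0), (Z, 1), (Z - 1, 1) for q = 0, where Z = (s + a) div f. *)
definition third_weight :: "nat \<Rightarrow> nat \<Rightarrow> nat \<Rightarrow> nat \<Rightarrow> nat \<Rightarrow> int" where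
  "third_weight a b f g s =
    (if 2 \<le> s div f then - int g * (int (s div f) - 2)
     else if s div f = 1 then int b - int g * int ((s + a) div f)
     else int b - int g * (int ((s + a) div f) - 1))"

locale sylvester_triple_diff = sylvester_triple a b c f "int g" for a b c f g :: nat +
  assumes f_pos: "0 < f" and f_le_a: "f \<le> a" and c_large: "2 * int g * int a \<le> int c"
begin

lemma two_ga_le_c: "2 * (int g * int a) \<le> int c"
  and f_mult_b_eq: "int f * int b = int c + int g * int a"
  using c_large c_eq by (simp_all add: mult.assoc)

lemma weight_nonneg:
  assumes "f * z \<le> s + a * m" and "s < a" and "1 \<le> m"
  shows "0 \<le> weight z m"
proof -
  have "int c \<le> int m * int c"
    using mult_right_mono[of 1 "int m" "int c"] assms(3) by simp
  moreover have "int g * int s \<le> int g * int a"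
    using assms(2) by (intro mult_left_mono) simp_all
  moreover have "0 \<le> int g * int a"
    by simp
  ultimately have "0 \<le> int f * weight z m"
    using m_mult_c_le_weight[OF _ assms(1)] two_ga_le_c by linarith
  then show ?thesis
    using f_pos by (simp add: zero_le_mult_iff)
qed

lemma b_le_weight:
  assumes "f * z \<le> s + a * m" and "s < a" and "2 \<le> m"
  shows "int b \<le> weight z m"
proof -
  have "2 * int c \<le> int m * int c"
    using mult_right_mono[of 2 "int m" "int c"] assms(3) by simp
  moreover have "int g * int s \<le> int g * int a"
    using assms(2) by (intro mult_left_mono) simp_all
  ultimately have "int f * int b \<le> int f * weight z m"
    using m_mult_c_le_weight[OF _ assms(1)] two_ga_le_c f_mult_b_eq by linarith
  then show ?thesis
    using f_pos by simp
qed

lemma g_mult_div_le_b: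
  assumes "s < 2 * f"
  shows "int g * int ((s + a) div f) \<le> int b"
proof -
  have "f * ((s + a) div f) \<le> s + a"
    by (rule mult_div_le_less(1)[OF f_pos])
  also have "\<dots> \<le> 3 * a"
    using assms f_le_a by simp
  finally have "int g * (int f * int ((s + a) div f)) \<le> int g * (3 * int a)"
    by (intro mult_left_mono) (simp_all flip: of_nat_mult)
  then have "int f * (int g * int ((s + a) div f)) \<le> int f * int b"
    using two_ga_le_c f_mult_b_eq by (simp add: algebra_simps)
  then show ?thesis
    using f_pos by simp
qed

lemma mem_lattice_points_iff_le_div:
  "(z, m) \<in> lattice_points s u \<longleftrightarrow> z \<le> (s + a * m) div f \<and> int b * int m - int g * int z \<le> u"
  using f_pos by (simp add: lattice_points_def weight_def less_eq_div_iff_mult_less_eq mult.commute)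

lemma three_le_card_lattice_points_third_weight:
  assumes "s < a"
  shows "3 \<le> card (lattice_points s (third_weight a b f g s))"
proof -
  define q where "q = s div f"
  define Z where "Z = (s + a) div f"
  consider "2 \<le> q" | "q = 1" | "q = 0"
    by linarith
  then show ?thesis
  proof cases
    case 1
    then show ?thesis
      using assms by (intro three_le_card_lattice_points[of s "(q, 0)" "(q - 1, 0)" "(q - 2, 0)"])
        (auto simp: mem_lattice_points_iff_le_div third_weight_def of_nat_diff algebra_simps q_def)
  next
    case 2
    then have "s < 2 * f"
      using mult_div_le_less(2)[OF f_pos, of s] unfolding q_def by simp
    then have "int g * int Z \<le> int b"
      unfolding Z_def by (rule g_mult_div_le_b)
    then show ?thesis
      using assms 2 by (intro three_le_card_lattice_points[of s "(0, 0)" "(1, 0)" "(Z, 1)"])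
        (auto simp: mem_lattice_points_iff_le_div third_weight_def q_def Z_def)
  next
    case 3
    then have "s < 2 * f"
      using mult_div_le_less(2)[OF f_pos, of s] f_pos unfolding q_def by simp
    then have "int g * int Z \<le> int b"
      unfolding Z_def by (rule g_mult_div_le_b)
    moreover have "1 \<le> Z"
      using f_le_a f_pos unfolding Z_def by (simp add: less_eq_div_iff_mult_less_eq)
    ultimately show ?thesis
      using assms 3 by (intro three_le_card_lattice_points[of s "(0, 0)" "(Z, 1)" "(Z - 1, 1)"])
        (auto simp: mem_lattice_points_iff_le_div third_weight_def q_def Z_def of_nat_diff algebra_simps)
  qed
qed

lemma mem_lattice_points_below:
  assumes "(z, m) \<in> lattice_points s (u - 1)"
  shows "f * z \<le> s + a * m" and "z \<le> (s + a * m) div f" and "int b * int m - int g * int z < u"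
  using assms mem_lattice_points_iff_le_div[of z m] by (auto simp: lattice_points_def weight_def)

lemma card_lattice_points_below_third_weight_high:
  assumes "s < a" and "2 \<le> s div f"
  shows "card (lattice_points s (third_weight a b f g s - 1)) \<le> 2"
proof (rule card_lattice_points_le_2[of _ _ "(s div f - 1, 0)" "(s div f, 0)"])
  fix z m
  assume zm: "(z, m) \<in> lattice_points s (third_weight a b f g s - 1)"
  then have W: "int b * int m - int g * int z < - int g * (int (s div f) - 2)"
    using mem_lattice_points_below(3) assms(2) by (fastforce simp: third_weight_def)
  have "0 \<le> int g * (int (s div f) - 2)"
    using assms(2) by simp
  then have "m = 0"
    using weight_nonneg[OF mem_lattice_points_below(1)[OF zm] assms(1)] W
    by (cases m) (auto simp: weight_def)
  moreover have "\<not> z \<le> s div f - 2"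
  proof
    assume "z \<le> s div f - 2"
    then have "int g * int z \<le> int g * (int (s div f) - 2)"
      using assms(2) by (intro mult_left_mono) auto
    then show False
      using W \<open>m = 0\<close> by simp
  qed
  ultimately show "(z, m) = (s div f - 1, 0) \<or> (z, m) = (s div f, 0)"
    using mem_lattice_points_below(2)[OF zm] by auto
qed

lemma card_lattice_points_below_third_weight_one:
  assumes "s < a" and "s div f = 1"
  shows "card (lattice_points s (third_weight a b f g s - 1)) \<le> 2"
proof (rule card_lattice_points_le_2[of _ _ "(0, 0)" "(1, 0)"])
  fix z m
  assume zm: "(z, m) \<in> lattice_points s (third_weight a b f g s - 1)"
  define Z where "Z = (s + a) div f"
  have W: "int b * int m - int g * int z < int b - int g * int Z"
    using mem_lattice_points_below(3)[OF zm] assms(2) by (simp add: third_weight_def Z_def)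
  have "m = 0"
  proof (rule ccontr)
    assume "m \<noteq> 0"
    then consider "m = 1" | "2 \<le> m"
      by linarith
    then show False
    proof cases
      case 1
      then have "int g * int z \<le> int g * int Z"
        using mem_lattice_points_below(2)[OF zm] by (intro mult_left_mono) (simp_all add: Z_def)
      then show False
        using W 1 by simp
    next
      case 2
      have "0 \<le> int g * int Z"
        by simp
      then show False
        using b_le_weight[OF mem_lattice_points_below(1)[OF zm] assms(1) 2, unfolded weight_def] W
        by linarith
    qed
  qed
  then show "(z, m) = (0, 0) \<or> (z, m) = (1, 0)"
    using mem_lattice_points_below(2)[OF zm] assms(2) by auto
qed

lemma card_lattice_points_below_third_weight_zero:
  assumes "s < a" and "s div f = 0"
  shows "card (lattice_points s (third_weight a b f g s - 1)) \<le> 2"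
proof (rule card_lattice_points_le_2[of _ _ "(0, 0)" "((s + a) div f, 1)"])
  fix z m
  assume zm: "(z, m) \<in> lattice_points s (third_weight a b f g s - 1)"
  define Z where "Z = (s + a) div f"
  have "1 \<le> Z"
    using f_le_a f_pos unfolding Z_def by (simp add: less_eq_div_iff_mult_less_eq)
  have W: "int b * int m - int g * int z < int b - int g * (int Z - 1)"
    using mem_lattice_points_below(3)[OF zm] assms(2) by (simp add: third_weight_def Z_def)
  consider "m = 0" | "m = 1" | "2 \<le> m"
    by linarith
  then show "(z, m) = (0, 0) \<or> (z, m) = (Z, 1)"
  proof cases
    case 1
    then show ?thesis
      using mem_lattice_points_below(2)[OF zm] assms(2) by simp
  next
    case 2
    have "\<not> z \<le> Z - 1"
    proof
      assume "z \<le> Z - 1"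
      then have "int g * int z \<le> int g * (int Z - 1)"
        using \<open>1 \<le> Z\<close> by (intro mult_left_mono) auto
      then show False
        using W 2 by simp
    qed
    then show ?thesis
      using mem_lattice_points_below(2)[OF zm] 2 by (simp add: Z_def)
  next
    case 3
    have "0 \<le> int g * (int Z - 1)"
      using \<open>1 \<le> Z\<close> by simp
    then show ?thesis
      using b_le_weight[OF mem_lattice_points_below(1)[OF zm] assms(1) 3] W by (simp add: weight_def)
  qed
qed

lemma card_lattice_points_below_third_weight:
  assumes "s < a"
  shows "card (lattice_points s (third_weight a b f g s - 1)) \<le> 2"
proof -
  consider "2 \<le> s div f" | "s div f = 1" | "s div f = 0"
    by linarith
  then show ?thesis
    using card_lattice_points_below_third_weight_high card_lattice_points_below_third_weight_one
      card_lattice_points_below_third_weight_zero assms by cases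
qed

end

lemma sylvester_2_c_eq_diff:
  fixes a b c f g :: nat
  assumes "0 < a" and "0 < b" and "coprime a b" and "0 < f" and "f \<le> a"
    and c_eq: "int c = int f * int b - int g * int a" and large: "2 * int g * int a \<le> int c"
  shows "2 * int (sylvester_p 2 [a, b, c])
    = (int a - 1) * (int b - 1) + 2 * (\<Sum>s<a. third_weight a b f g s)"
proof -
  have "0 < c"
  proof (cases "g = 0")
    case True
    then show ?thesis
      using c_eq \<open>0 < b\<close> \<open>0 < f\<close> by (simp flip: of_nat_mult)
  next
    case False
    then have "0 < 2 * int g * int a"
      using \<open>0 < a\<close> by simp
    then show ?thesis
      using large by linarith
  qed
  interpret sylvester_triple_diff a b c f g
    using assms \<open>0 < c\<close> by unfold_locales simp_all
  show ?thesis
    by (rule sylvester_2_eq_sum[OF three_le_card_lattice_points_third_weight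
          card_lattice_points_below_third_weight])
qed

section \<open>Summing the third weights\<close>

lemma sum_div_block:
  fixes f Q R :: nat
  assumes "0 < f" and "R \<le> f"
  shows "(\<Sum>s\<in>{Q * f..<Q * f + R}. int (s div f)) = int R * int Q"
proof -
  have "s div f = Q" if "s \<in> {Q * f..<Q * f + R}" for s
    using that assms by (intro div_nat_eqI) (auto simp: algebra_simps)
  then show ?thesis
    by simp
qed

lemma sum_lessThan_div:
  fixes f Q R :: nat
  assumes "0 < f" and "R \<le> f"
  shows "2 * (\<Sum>s<Q * f + R. int (s div f)) = int f * int Q * (int Q - 1) + 2 * int R * int Q"
  using assms(2)
proof (induction Q arbitrary: R)
  case 0
  then show ?case
    using sum_div_block[OF assms(1), of R 0] by (simp add: lessThan_atLeast0)
next
  case (Suc Q)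
  have "(\<Sum>s<Suc Q * f + R. int (s div f))
      = (\<Sum>s<Q * f + f. int (s div f)) + (\<Sum>s\<in>{Suc Q * f..<Suc Q * f + R}. int (s div f))"
    using sum_lessThan_split[of "Suc Q * f" "Suc Q * f + R"] by (simp add: add.commute)
  then show ?case
    using Suc.IH[of f] sum_div_block[OF assms(1) Suc.prems, of "Suc Q"] by (simp add: algebra_simps)
qed

lemma sum_third_weight_low:
  fixes a b f g M :: nat
  assumes "0 < f" and "f \<le> M" and "M \<le> 2 * f" and "M \<le> a"
  shows "(\<Sum>s<M. third_weight a b f g s) = int M * int b + int f * int g
    - int g * ((\<Sum>s<a + M. int (s div f)) - (\<Sum>s<a. int (s div f)))"
proof -
  have "third_weight a b f g s
      = int b - int g * int ((s + a) div f) + (if f \<le> s then 0 else int g)" if "s < M" for s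
  proof (cases "f \<le> s")
    case True
    then have "s div f = 1"
      using that assms by (intro div_nat_eqI) auto
    then show ?thesis
      using True by (simp add: third_weight_def)
  next
    case False
    moreover have "1 \<le> (s + a) div f"
      using assms by (simp add: less_eq_div_iff_mult_less_eq)
    ultimately show ?thesis
      by (simp add: third_weight_def of_nat_diff algebra_simps)
  qed
  then have "(\<Sum>s<M. third_weight a b f g s)
      = (\<Sum>s<M. int b - int g * int ((s + a) div f)) + (\<Sum>s<M. if f \<le> s then 0 else int g)"
    by (simp add: sum.distrib)
  also have "(\<Sum>s<M. if f \<le> s then 0 else int g) = int f * int g"
    using sum_lessThan_if_le[OF assms(2), of 0 "int g"] by simp
  also have "(\<Sum>s<M. int b - int g * int ((s + a) div f))
      = int M * int b - int g * ((\<Sum>s<a + M. int (s div f)) - (\<Sum>s<a. int (s div f)))"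
    using sum_lessThan_shift[where h = "\<lambda>s. int (s div f)" and M = M and A = a]
    by (simp add: sum_subtractf sum_distrib_left[symmetric])
  finally show ?thesis
    by simp
qed

lemma sum_third_weight_large_f:
  fixes a b f g :: nat
  assumes "0 < f" and "f < a" and "a \<le> 2 * f" and "3 * f \<le> 2 * a"
  shows "(\<Sum>s<a. third_weight a b f g s) = int a * int b - int g * (5 * int a - 6 * int f)"
proof -
  have "a - f \<le> f" and "2 * a - 3 * f \<le> f" and "1 * f + (a - f) = a" and "3 * f + (2 * a - 3 * f) = a + a"
    using assms by simp_all
  then have "2 * (\<Sum>s<a. int (s div f)) = 2 * (int a - int f)"
    and "2 * (\<Sum>s<a + a. int (s div f)) = 6 * int f + 6 * (2 * int a - 3 * int f)"
    using sum_lessThan_div[OF assms(1), of "a - f" 1] sum_lessThan_div[OF assms(1), of "2 * a - 3 * f" 3]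
      assms by (simp_all only:) (simp_all add: of_nat_diff)
  then have double: "(\<Sum>s<a + a. int (s div f)) = (\<Sum>s<a. int (s div f)) + 5 * int a - 5 * int f"
    by (simp add: algebra_simps)
  show ?thesis
    using sum_third_weight_low[of f a a b g] assms by (simp add: double algebra_simps)
qed

lemma sum_third_weight_small_f:
  fixes a b f g :: nat
  assumes "0 < f" and "2 * f < a"
  defines "r \<equiv> (a - 1) div f"
  shows "2 * (\<Sum>s<a. third_weight a b f g s)
    = 4 * int f * int b - int g * (2 * int r * int a - int f * (int r + 3) * (int r - 2))"
proof -
  define R where "R = a - r * f"
  define D where "D N = (\<Sum>s<N. int (s div f))" for N
  have "r * f \<le> a - 1" and "a - 1 < r * f + f"
    using mult_div_le_less[OF assms(1), of "a - 1"] unfolding r_def by (simp_all add: mult.commute)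
  then have a_eq: "a = r * f + R" and "R \<le> f"
    using assms(2) unfolding R_def by auto
  have "(r + 2) * f + R = a + 2 * f" and "2 * f + 0 = 2 * f"
    using a_eq by simp_all
  then have D1: "2 * D (a + 2 * f) = int f * int (r + 2) * int (r + 1) + 2 * int R * int (r + 2)"
    and D2: "2 * D (2 * f) = 2 * int f"
    using sum_lessThan_div[OF assms(1) \<open>R \<le> f\<close>, of "r + 2"] sum_lessThan_div[OF assms(1), of 0 2]
    unfolding D_def by (simp_all only:) simp_all
  have high: "third_weight a b f g s = 2 * int g - int g * int (s div f)" if "2 * f \<le> s" for s
    using that assms(1) by (simp add: third_weight_def less_eq_div_iff_mult_less_eq algebra_simps)
  have "(\<Sum>s<a. third_weight a b f g s)
      = (\<Sum>s<2 * f. third_weight a b f g s) + (\<Sum>s\<in>{2 * f..<a}. third_weight a b f g s)"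
    using sum_lessThan_split[of "2 * f" a] assms(2) by simp
  also have "(\<Sum>s\<in>{2 * f..<a}. third_weight a b f g s)
      = (\<Sum>s\<in>{2 * f..<a}. 2 * int g - int g * int (s div f))"
    using high by (intro sum.cong) auto
  also have "\<dots> = 2 * int g * int (a - 2 * f) - int g * (D a - D (2 * f))"
    using sum_lessThan_split[of "2 * f" a "\<lambda>s. int (s div f)"] assms(2)
    by (simp add: D_def sum_subtractf sum_distrib_left[symmetric])
  finally have "2 * (\<Sum>s<a. third_weight a b f g s)
      = 4 * int f * int b + 2 * int f * int g + 4 * int g * (int a - 2 * int f)
        - int g * (2 * D (a + 2 * f)) + int g * (2 * D (2 * f))"
    using sum_third_weight_low[of f "2 * f" a b g] assms by (simp add: D_def of_nat_diff algebra_simps)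
  also have "\<dots> = 4 * int f * int b - int g * (2 * int r * int a - int f * (int r + 3) * (int r - 2))"
    unfolding D1 D2 by (simp add: a_eq algebra_simps)
  finally show ?thesis .
qed

section \<open>Fibonacci generators\<close>

lemma fib_add_eq_diff:
  assumes "2 \<le> k"
  shows "int (fib (n + k)) = int (fib k) * int (fib (n + 2)) - int (fib (k - 2)) * int (fib n)"
proof -
  obtain l where k: "k = l + 2"
    using assms by (metis add.commute le_Suc_ex)
  have "fib (n + k) = fib (Suc l) * fib (Suc (n + 1)) + fib l * fib (n + 1)"
    using fib_add[of "n + 1" l] k by (simp add: add.assoc)
  then show ?thesis
    using fib_plus_2[of l] fib_plus_2[of n] k by (simp add: algebra_simps)
qed

lemma fib_around:
  assumes "3 \<le> i"
  obtains x y :: int where "0 \<le> x" and "x \<le> y" and "1 \<le> y"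
    and "int (fib (i - 3)) = x" and "int (fib (i - 2)) = y" and "int (fib (i - 1)) = x + y"
    and "int (fib i) = x + 2 * y" and "int (fib (i + 1)) = 2 * x + 3 * y"
    and "int (fib (i + 2)) = 3 * x + 5 * y" and "int (fib (i + 3)) = 5 * x + 8 * y"
proof -
  obtain j where i: "i = j + 3"
    using assms by (metis add.commute le_add_diff_inverse)
  show ?thesis
  proof (rule that[of "int (fib j)" "int (fib (Suc j))"])
    show "int (fib j) \<le> int (fib (Suc j))"
      using fib_Suc_mono[of j] by simp
    show "1 \<le> int (fib (Suc j))"
      using fib_neq_0_nat[of "Suc j"] by simp
  qed (simp_all add: i numeral_eq_Suc)
qed

lemma coprime_fib_add_2: "coprime (fib i) (fib (i + 2))"
  using gcd_fib_add[of i 2] by (simp add: coprime_iff_gcd_eq_1 add.commute)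

lemma sylvester_2_fib_large_k:
  assumes "3 \<le> i" and "i + 3 \<le> k"
  shows "2 * int (sylvester_p 2 [fib i, fib (i + 2), fib (i + k)])
    = 5 * int (fib i) * int (fib (i + 2)) - int (fib i) - int (fib (i + 2)) + 1"
proof -
  obtain x y where xy: "0 \<le> x" "x \<le> y" "1 \<le> y" and F: "int (fib i) = x + 2 * y"
    "int (fib (i + 1)) = 2 * x + 3 * y" "int (fib (i + 2)) = 3 * x + 5 * y"
    "int (fib (i + 3)) = 5 * x + 8 * y"
    using fib_around[OF assms(1)] by metis
  have "3 * int (fib i) * int (fib (i + 2))
      = int (fib (i + (i + 3))) - (4 * (x * x) + 9 * (x * y) + 4 * (y * y))"
    using fib_add_eq_diff[of "i + 3" i] F by (simp add: algebra_simps)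
  also have "\<dots> \<le> int (fib (i + (i + 3)))"
    using xy mult_nonneg_nonneg[of x x] mult_nonneg_nonneg[of x y] mult_nonneg_nonneg[of y y] by linarith
  also have "\<dots> \<le> int (fib (i + k))"
    using fib_mono[of "i + (i + 3)" "i + k"] assms(2) by simp
  finally have large: "3 * int (fib i) * int (fib (i + 2)) - int (fib (i + 2)) \<le> int (fib (i + k))"
    by simp
  have "0 < fib i" and "0 < fib (i + 2)" and "2 \<le> k"
    using assms by (simp_all add: fib_neq_0_nat)
  then have "2 * int (sylvester_p 2 [fib i, fib (i + 2), fib (i + k)])
      = (int (fib i) - 1) * (int (fib (i + 2)) - 1) + 4 * int (fib i) * int (fib (i + 2))"
    using sylvester_2_large_c[OF _ _ coprime_fib_add_2 fib_add_eq_diff large] by blast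
  then show ?thesis
    by (simp add: algebra_simps)
qed

lemma sylvester_2_fib_2i_plus_2:
  assumes "3 \<le> i"
  shows "2 * int (sylvester_p 2 [fib i, fib (i + 2), fib (2 * i + 2)])
    = (7 * int (fib (i + 2)) - 6 * int (fib i) - 1) * int (fib i) - int (fib (i + 2)) + 1"
proof -
  obtain x y where xy: "0 \<le> x" "x \<le> y" "1 \<le> y" and F: "int (fib (i - 1)) = x + y" "int (fib i) = x + 2 * y"
    "int (fib (i + 2)) = 3 * x + 5 * y" "int (fib (i + 3)) = 5 * x + 8 * y"
    using fib_around[OF assms] by metis
  have "int (fib (i + (i + 2))) = int (fib (i - 1) * fib (i + 2) + fib (i + 3) * fib i)"
    using fib_add_eq_diff[of "i + 2" i] F by (simp add: algebra_simps)
  moreover have "i + (i + 2) = 2 * i + 2"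
    by simp
  ultimately have "fib (2 * i + 2) = fib (i - 1) * fib (i + 2) + fib (i + 3) * fib i"
    by (simp only: of_nat_eq_iff)
  moreover have "fib (i - 1) \<le> fib i" and "fib (i + 2) \<le> fib (i + 3)"
    by (intro fib_mono, simp)+
  moreover have "int (fib (i + 3)) \<le> int (2 * fib (i + 2))"
    using F xy by simp
  then have "fib (i + 3) \<le> 2 * fib (i + 2)"
    by (simp only: of_nat_le_iff)
  moreover have "0 < fib i" and "0 < fib (i + 2)"
    using assms by (simp_all add: fib_neq_0_nat)
  ultimately have "2 * int (sylvester_p 2 [fib i, fib (i + 2), fib (2 * i + 2)])
      = (int (fib i) - 1) * (int (fib (i + 2)) - 1)
        + 2 * (int (fib (i - 1)) * (2 * int (fib (i + 2))) + int (fib i - fib (i - 1)) * int (fib (i + 3)))"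
    using sylvester_2_c_eq_add[OF _ _ coprime_fib_add_2] by blast
  moreover have "int (fib i - fib (i - 1)) = y"
    using F \<open>fib (i - 1) \<le> fib i\<close> by (simp add: of_nat_diff)
  ultimately show ?thesis
    unfolding F by (simp add: algebra_simps)
qed

lemma sylvester_2_fib_2i_plus_1:
  assumes "3 \<le> i"
  shows "2 * int (sylvester_p 2 [fib i, fib (i + 2), fib (2 * i + 1)])
    = (7 * int (fib (i + 2)) - 8 * int (fib i) - 1) * int (fib i) - int (fib (i + 2)) + 1"
proof -
  obtain x y where xy: "0 \<le> x" "x \<le> y" "1 \<le> y" and F: "int (fib (i - 1)) = x + y" "int (fib i) = x + 2 * y"
    "int (fib (i + 1)) = 2 * x + 3 * y" "int (fib (i + 2)) = 3 * x + 5 * y"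
    using fib_around[OF assms] by metis
  have "int (fib (i + (i + 1))) = int (fib (i - 1) * fib (i + 2) + 2 * fib i * fib i)"
    using fib_add_eq_diff[of "i + 1" i] assms F by (simp add: algebra_simps)
  moreover have "i + (i + 1) = 2 * i + 1"
    by simp
  ultimately have c_eq: "fib (2 * i + 1) = fib (i - 1) * fib (i + 2) + 2 * fib i * fib i"
    by (simp only: of_nat_eq_iff)
  have "fib (i - 1) \<le> fib i"
    by (intro fib_mono) simp
  have "int (2 * fib i) \<le> int (fib (i + 2))" and "int (fib (i + 2)) \<le> int (4 * fib i)"
    using F xy by simp_all
  then have "2 * fib i \<le> fib (i + 2)" and "fib (i + 2) \<le> 4 * fib i"
    by (simp_all only: of_nat_le_iff)
  moreover have "0 < fib i" and "0 < fib (i + 2)"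
    using assms by (simp_all add: fib_neq_0_nat)
  ultimately have "2 * int (sylvester_p 2 [fib i, fib (i + 2), fib (2 * i + 1)])
      = (int (fib i) - 1) * (int (fib (i + 2)) - 1) + 2 * (int (fib (i - 1)) * (2 * int (fib i)
        + int (fib (i + 2))) + int (fib i - fib (i - 1)) * int (fib (i + 2)))"
    using sylvester_2_c_eq_add_double_square[OF _ _ coprime_fib_add_2 c_eq \<open>fib (i - 1) \<le> fib i\<close>]
    by blast
  moreover have "int (fib i - fib (i - 1)) = y"
    using F \<open>fib (i - 1) \<le> fib i\<close> by (simp add: of_nat_diff)
  ultimately show ?thesis
    unfolding F by (simp add: algebra_simps)
qed

lemma sylvester_2_fib_2i:
  assumes "3 \<le> i"
  shows "2 * int (sylvester_p 2 [fib i, fib (i + 2), fib (2 * i)])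
    = 3 * int (fib i) * int (fib (i + 2)) - int (fib i) - int (fib (i + 2)) + 1"
proof -
  obtain x y where xy: "0 \<le> x" "x \<le> y" "1 \<le> y" and F: "int (fib (i - 1)) = x + y" "int (fib i) = x + 2 * y"
    "int (fib (i + 1)) = 2 * x + 3 * y" "int (fib (i + 2)) = 3 * x + 5 * y"
    using fib_around[OF assms] by metis
  have "int (fib (i - 1) + fib (i + 1)) \<le> int (fib (i + 2))"
    and "int (fib (i + 2)) \<le> int (2 * (fib (i - 1) + fib (i + 1)))"
    using F xy by simp_all
  then have bounds: "fib (i - 1) + fib (i + 1) \<le> fib (i + 2)" "fib (i + 2) \<le> 2 * (fib (i - 1) + fib (i + 1))"
    by (simp_all only: of_nat_le_iff)
  have "0 < fib i" and "0 < fib (i + 2)"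
    using assms by (simp_all add: fib_neq_0_nat)
  then have "2 * int (sylvester_p 2 [fib i, fib (i + 2), fib (2 * i)])
      = (int (fib i) - 1) * (int (fib (i + 2)) - 1) + 2 * int (fib i) * int (fib (i + 2))"
    by (rule sylvester_2_c_eq_mult[OF _ _ coprime_fib_add_2 fib_rec_even bounds])
  then show ?thesis
    by (simp add: algebra_simps)
qed

lemma sylvester_2_fib_2i_minus_1:
  assumes "3 \<le> i"
  shows "2 * int (sylvester_p 2 [fib i, fib (i + 2), fib (2 * i - 1)])
    = (170 * int (fib i) - 1) * int (fib i) + (24 * int (fib (i + 2)) - 125 * int (fib i) - 1) * int (fib (i + 2)) + 1"
proof -
  obtain x y where xy: "0 \<le> x" "x \<le> y" "1 \<le> y" and F: "int (fib (i - 3)) = x"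
    "int (fib (i - 1)) = x + y" "int (fib i) = x + 2 * y" "int (fib (i + 2)) = 3 * x + 5 * y"
    using fib_around[OF assms] by metis
  have c_eq: "int (fib (2 * i - 1)) = int (fib (i - 1)) * int (fib (i + 2)) - int (fib (i - 3)) * int (fib i)"
    using fib_add_eq_diff[of "i - 1" i] assms by (simp add: numeral_eq_Suc)
  have "2 * int (fib (i - 3)) * int (fib i) \<le> int (fib (2 * i - 1))"
    using c_eq F xy mult_nonneg_nonneg[of x y] by (simp add: algebra_simps)
  moreover have pos: "0 < fib (i - 1)" "0 < fib i" "0 < fib (i + 2)"
    using assms by (simp_all add: fib_neq_0_nat)
  moreover have "int (fib (i - 1)) < int (fib i)" and "int (fib i) \<le> int (2 * fib (i - 1))"
    and "int (3 * fib (i - 1)) \<le> int (2 * fib i)"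
    using F xy by simp_all
  then have ineqs: "fib (i - 1) < fib i" "fib i \<le> 2 * fib (i - 1)" "3 * fib (i - 1) \<le> 2 * fib i"
    by (simp_all only: of_nat_le_iff of_nat_less_iff)
  ultimately have "2 * int (sylvester_p 2 [fib i, fib (i + 2), fib (2 * i - 1)])
      = (int (fib i) - 1) * (int (fib (i + 2)) - 1)
        + 2 * (\<Sum>s<fib i. third_weight (fib i) (fib (i + 2)) (fib (i - 1)) (fib (i - 3)) s)"
    by (intro sylvester_2_c_eq_diff[OF pos(2,3) coprime_fib_add_2 pos(1) _ c_eq]) simp_all
  also have "(\<Sum>s<fib i. third_weight (fib i) (fib (i + 2)) (fib (i - 1)) (fib (i - 3)) s)
      = int (fib i) * int (fib (i + 2)) - int (fib (i - 3)) * (5 * int (fib i) - 6 * int (fib (i - 1)))"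
    by (rule sum_third_weight_large_f[OF pos(1) ineqs])
  finally show ?thesis
    unfolding F by (simp add: algebra_simps)
qed

lemma sylvester_2_fib_small_k:
  assumes "3 \<le> i" and "3 \<le> k" and r: "r = (int (fib i) - 1) div int (fib k)" and "2 \<le> r"
  shows "2 * int (sylvester_p 2 [fib i, fib (i + 2), fib (i + k)])
    = ((int (fib i) + 4 * int (fib k) - 1) * int (fib (i + 2)) - int (fib i) + 1)
      - (2 * r * int (fib i) - (r + 3) * (r - 2) * int (fib k)) * int (fib (k - 2))"
proof -
  have pos: "0 < fib i" "0 < fib (i + 2)" "0 < fib k"
    using assms by (simp_all add: fib_neq_0_nat)
  have r_nat: "r = int ((fib i - 1) div fib k)"
    using r pos by (simp add: zdiv_int of_nat_diff)
  then have "2 * fib k \<le> fib i - 1"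
    using \<open>2 \<le> r\<close> pos(3) by (simp add: less_eq_div_iff_mult_less_eq mult.commute)
  then have "2 * fib k < fib i"
    using pos(1) by linarith
  have c_eq: "int (fib (i + k)) = int (fib k) * int (fib (i + 2)) - int (fib (k - 2)) * int (fib i)"
    using fib_add_eq_diff assms(2) by simp
  have "k = (k - 2) + 2"
    using assms(2) by simp
  then have "2 * fib (k - 2) \<le> fib k"
    using fib_plus_2[of "k - 2"] fib_Suc_mono[of "k - 2"] by simp
  moreover have "2 * fib i \<le> fib (i + 2)"
    using fib_plus_2[of i] fib_mono[of i "i + 1"] by simp
  ultimately have "2 * fib (k - 2) * (2 * fib i) \<le> fib k * fib (i + 2)"
    by (rule mult_le_mono)
  then have "int (2 * fib (k - 2) * (2 * fib i)) \<le> int (fib k * fib (i + 2))"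
    by (simp only: of_nat_le_iff)
  then have "2 * int (fib (k - 2)) * (2 * int (fib i)) \<le> int (fib k) * int (fib (i + 2))"
    by (simp only: of_nat_mult of_nat_numeral)
  then have "2 * int (fib (k - 2)) * int (fib i) \<le> int (fib (i + k))"
    unfolding c_eq using mult_nonneg_nonneg[of "int (fib (k - 2))" "int (fib i)"] by linarith
  then have "2 * int (sylvester_p 2 [fib i, fib (i + 2), fib (i + k)])
      = (int (fib i) - 1) * (int (fib (i + 2)) - 1)
        + 2 * (\<Sum>s<fib i. third_weight (fib i) (fib (i + 2)) (fib k) (fib (k - 2)) s)"
    using \<open>2 * fib k < fib i\<close>
    by (intro sylvester_2_c_eq_diff[OF pos(1,2) coprime_fib_add_2 pos(3) _ c_eq]) simp_all
  also have "2 * (\<Sum>s<fib i. third_weight (fib i) (fib (i + 2)) (fib k) (fib (k - 2)) s)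
      = 4 * int (fib k) * int (fib (i + 2)) - int (fib (k - 2)) * (2 * r * int (fib i)
        - int (fib k) * (r + 3) * (r - 2))"
    unfolding r_nat by (rule sum_third_weight_small_f[OF pos(3) \<open>2 * fib k < fib i\<close>])
  finally show ?thesis
    by (simp add: algebra_simps)
qed

theorem theorem11:
  fixes i k :: nat
  assumes "i \<ge> 3" and "k \<ge> 3"
  defines "F \<equiv> (\<lambda>m. int (fib m))"
  shows "(k \<ge> i + 3 \<longrightarrow>
           2 * int (sylvester_p 2 [fib i, fib (i+2), fib (i+k)])
             = 5 * F i * F (i+2) - F i - F (i+2) + 1)
       \<and> 2 * int (sylvester_p 2 [fib i, fib (i+2), fib (2*i+2)])
             = (7 * F (i+2) - 6 * F i - 1) * F i - F (i+2) + 1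
       \<and> 2 * int (sylvester_p 2 [fib i, fib (i+2), fib (2*i+1)])
             = (7 * F (i+2) - 8 * F i - 1) * F i - F (i+2) + 1
       \<and> 2 * int (sylvester_p 2 [fib i, fib (i+2), fib (2*i)])
             = 3 * F i * F (i+2) - F i - F (i+2) + 1
       \<and> 2 * int (sylvester_p 2 [fib i, fib (i+2), fib (2*i-1)])
             = (170 * F i - 1) * F i + (24 * F (i+2) - 125 * F i - 1) * F (i+2) + 1
       \<and> (\<forall>r::int. r = (F i - 1) div F k \<longrightarrow> r \<ge> 2 \<longrightarrow>
           2 * int (sylvester_p 2 [fib i, fib (i+2), fib (i+k)])
             = ((F i + 4 * F k - 1) * F (i+2) - F i + 1)
               - (2 * r * F i - (r + 3) * (r - 2) * F k) * F (k - 2))"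
  unfolding F_def
  using sylvester_2_fib_large_k[OF assms(1)] sylvester_2_fib_2i_plus_2[OF assms(1)]
    sylvester_2_fib_2i_plus_1[OF assms(1)] sylvester_2_fib_2i[OF assms(1)]
    sylvester_2_fib_2i_minus_1[OF assms(1)] sylvester_2_fib_small_k[OF assms(1,2)]
  by blast

end
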